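(* For all integers $n,k\ge1$, $$\frac{L_2(k)}{n^k}<\sum_{t=k}^\infty\frac{g_{e,2}(t)}{n^t}<\frac{U_2(k)}{n^k},$$ where $L_2(k)=\left(-\frac{24\cosh\alpha}{23}-\frac{12}{5\sqrt{k+1}}\right)24^{-k}$ and $U_2(k)=\left(-\cosh\alpha+\frac{4\sqrt2\sinh\alpha}{\alpha}\sqrt{k+1}+\frac{66}{25\sqrt{k+1}}\right)24^{-k}$.
   Context: $\alpha=\pi/6$. $(a)_m=a(a+1)\cdots(a+m-1)$ is the rising factorial ($(a)_0=1$); $\binom{x}{m}=x(x-1)\cdots(x-m+1)/m!$ for $m\ge1$, $\binom{x}{0}=1$. For $t\ge1$, $$S_2(t)=\sum_{s=0}^{t-1}(1/2-s)_{s+1}\binom{-3/2}{t-s-1}\sum_{u=0}^s\frac{(-1)^u(-s)_u}{(s+u+1)!\,(2u)!}\left(\frac{\pi^2}{36}\right)^u,\qquad g_{e,2}(t)=\frac{(-1)^{t-1}}{24^t}S_2(t).$$ *)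

theory Defs
  imports "HOL-Analysis.Analysis"
begin

definition alpha6 :: real where "alpha6 = pi / 6"

definition S2 :: "nat \<Rightarrow> real" where
  "S2 t = (\<Sum>s<t. pochhammer (1/2 - real s) (s+1) * ((-3/2 :: real) gchoose (t - s - 1)) *
      (\<Sum>u\<le>s. (-1)^u * pochhammer (- real s) u / (fact (s+u+1) * fact (2*u)) * (pi^2/36)^u))"

definition g_e2 :: "nat \<Rightarrow> real" where
  "g_e2 t = (-1)^(t-1) / 24^t * S2 t"

definition L2 :: "nat \<Rightarrow> real" where
  "L2 k = (- 24 * cosh alpha6 / 23 - 12 / (5 * sqrt (real k + 1))) * 24 powr (- real k)"

definition U2 :: "nat \<Rightarrow> real" where
  "U2 k = (- cosh alpha6 + 4 * sqrt 2 * sinh alpha6 / alpha6 * sqrt (real k + 1)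
           + 66 / (25 * sqrt (real k + 1))) * 24 powr (- real k)"

end

theory Submission
  imports Defs
begin

text \<open>
  Multiplied by \<open>(-1)^(t-1)\<close>, every summand of \<open>S2 t\<close> becomes a product of three
  nonnegative factors: \<open>(1/2)\<^sub>s / 2\<close>, \<open>|(-3/2 choose t-1-s)|\<close>, and the inner sum, whose
  terms \<open>(s-u+1)\<^sub>u / ((s+u+1)! (2u)!) x\<^sup>u\<close> with \<open>x = \<pi>\<^sup>2/36 \<le> 1/3\<close> are nonnegative and at most
  \<open>x\<^sup>u / (s+1)!\<close>. Since \<open>\<Sum>\<^sub>s\<^sub><\<^sub>N (1/2)\<^sub>s / (s+1)!\<close> telescopes to at most 2 and
  \<open>|(-3/2 choose m)|\<^sup>2 \<le> 2m+1\<close>, this gives \<open>0 \<le> (-1)^(t-1) S2 t \<le> 3/2 \<surd>(2t-1)\<close>.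
  The series is therefore a tail of a nonnegative series dominated by a geometric one with ratio
  1/12, which places it between the negative lower bound and the upper bound.
\<close>

lemma pochhammer_half_shift:
  "pochhammer (1/2 - real s) (s+1) = (-1)^s * (pochhammer (1/2) s / 2 :: real)"
proof -
  have "pochhammer (1/2 - real s) (s+1) = (-1)^(s+1) * pochhammer (-1/2 :: real) (s+1)"
    using pochhammer_minus[of "real s - 1/2" "s+1"] by (simp add: algebra_simps)
  also have "pochhammer (-1/2 :: real) (s+1) = - pochhammer (1/2) s / 2"
    by (simp add: pochhammer_rec)
  finally show ?thesis by simp
qed

lemma sum_pochhammer_half_over_fact:
  "(\<Sum>s<N. pochhammer (1/2) s / fact (s+1)) = 2 - 2 * pochhammer (1/2::real) N / fact N"
proof (induction N)
  case (Suc N)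
  define p where "p = pochhammer (1/2::real) N / fact N"
  have "(\<Sum>s<Suc N. pochhammer (1/2) s / fact (s+1)) = 2 - 2 * p + p / (real N + 1)"
    unfolding sum.lessThan_Suc Suc.IH by (simp add: p_def fact_Suc field_simps)
  also have "\<dots> = 2 - (2 * real N + 1) * p / (real N + 1)"
    by (simp add: field_simps)
  also have "(2 * real N + 1) * p / (real N + 1) = 2 * pochhammer (1/2) (Suc N) / fact (Suc N)"
    by (simp add: p_def pochhammer_rec' fact_Suc divide_simps) (simp add: algebra_simps)
  finally show ?case .
qed simp

definition binom_m32 :: "nat \<Rightarrow> real" where
  "binom_m32 m = pochhammer (3/2) m / fact m"

lemma gchoose_neg_three_halves: "((-3/2::real) gchoose m) = (-1)^m * binom_m32 m"
  by (simp add: gbinomial_pochhammer binom_m32_def)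

lemma binom_m32_nonneg: "0 \<le> binom_m32 m"
  by (simp add: binom_m32_def pochhammer_nonneg)

lemma binom_m32_Suc: "binom_m32 (Suc m) = (real m + 3/2) / (real m + 1) * binom_m32 m"
  by (simp add: binom_m32_def pochhammer_rec' field_simps)

lemma binom_m32_mono: "m \<le> m' \<Longrightarrow> binom_m32 m \<le> binom_m32 m'"
proof (induction m' rule: dec_induct)
  case (step m')
  have "binom_m32 m' \<le> (real m' + 3/2) / (real m' + 1) * binom_m32 m'"
    using binom_m32_nonneg[of m'] by (intro mult_le_cancel_right1[THEN iffD2]) auto
  with step show ?case by (simp add: binom_m32_Suc)
qed simp

lemma binom_m32_sq_le: "(binom_m32 m)^2 \<le> 2 * real m + 1"
proof (induction m)
  case (Suc m)
  have "(binom_m32 (Suc m))^2 = (real m + 3/2)^2 / (real m + 1)^2 * (binom_m32 m)^2"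
    by (simp add: binom_m32_Suc power_mult_distrib power_divide)
  also have "\<dots> \<le> (real m + 3/2)^2 / (real m + 1)^2 * (2 * real m + 1)"
    using Suc by (intro mult_left_mono) auto
  also have "\<dots> \<le> 2 * real (Suc m) + 1"
  proof -
    have "(real m + 3/2)^2 * (2 * real m + 1) \<le> (2 * real m + 3) * (real m + 1)^2"
      by (simp add: power2_eq_square algebra_simps)
    then show ?thesis by (simp add: pos_divide_le_eq ac_simps)
  qed
  finally show ?case .
qed (simp add: binom_m32_def)

definition S2_inner :: "real \<Rightarrow> nat \<Rightarrow> real" where
  "S2_inner x s =
     (\<Sum>u\<le>s. (-1)^u * pochhammer (- real s) u / (fact (s+u+1) * fact (2*u)) * x^u)"

lemma S2_inner_coeff_bounds:
  assumes "u \<le> s"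
  shows "0 \<le> (-1)^u * pochhammer (- real s) u / (fact (s+u+1) * fact (2*u) :: real)"
    and "(-1)^u * pochhammer (- real s) u / (fact (s+u+1) * fact (2*u)) \<le> 1 / (fact (s+1) :: real)"
proof -
  have signed: "(-1)^u * pochhammer (- real s) u = pochhammer (real s - real u + 1) u"
    by (simp add: pochhammer_minus)
  have numer_nonneg: "0 \<le> pochhammer (real s - real u + 1) u"
    by (intro pochhammer_nonneg) (use assms in auto)
  show "0 \<le> (-1)^u * pochhammer (- real s) u / (fact (s+u+1) * fact (2*u) :: real)"
    unfolding signed using numer_nonneg by simp
  have fact_split: "(fact (s+u+1) :: real) = fact (s+1) * pochhammer (real s + 2) u"
    using pochhammer_product'[of "1::real" "s+1" u]
    by (simp add: pochhammer_fact add_ac)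
  have "pochhammer (real s - real u + 1) u / (fact (s+u+1) * fact (2*u))
      \<le> pochhammer (real s + 2) u / (fact (s+1) * pochhammer (real s + 2) u * fact (2*u))"
    unfolding fact_split
  proof (rule divide_right_mono)
    show "pochhammer (real s - real u + 1) u \<le> pochhammer (real s + 2) u"
      unfolding pochhammer_prod by (intro prod_mono) (use assms in auto)
  qed (simp add: pochhammer_nonneg)
  also have "\<dots> = 1 / (fact (s+1) * fact (2*u))"
    using pochhammer_pos[of "real s + 2" u] by simp
  also have "\<dots> \<le> 1 / fact (s+1)"
    by (intro divide_left_mono) (auto simp: fact_ge_1)
  finally show "(-1)^u * pochhammer (- real s) u / (fact (s+u+1) * fact (2*u)) \<le> 1 / (fact (s+1) :: real)"
    unfolding signed .
qed

lemma S2_inner_nonneg: "0 \<le> x \<Longrightarrow> 0 \<le> S2_inner x s"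
  unfolding S2_inner_def by (intro sum_nonneg mult_nonneg_nonneg S2_inner_coeff_bounds) auto

lemma S2_inner_le:
  assumes "0 \<le> x" "x < 1"
  shows "S2_inner x s \<le> 1 / ((1 - x) * fact (s+1))"
proof -
  have "(-1)^u * pochhammer (- real s) u / (fact (s+u+1) * fact (2*u)) * x^u
      \<le> 1 / fact (s+1) * x^u" if "u \<le> s" for u
    by (intro mult_right_mono S2_inner_coeff_bounds(2) that) (use assms in auto)
  then have "S2_inner x s \<le> (\<Sum>u<Suc s. x^u) / fact (s+1)"
    unfolding S2_inner_def lessThan_Suc_atMost sum_divide_distrib
    by (intro sum_mono) auto
  also have "(\<Sum>u<Suc s. x^u) = (1 - x^Suc s) / (1 - x)"
    by (subst sum_gp_strict) (use assms in auto)
  also have "\<dots> \<le> 1 / (1 - x)"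
    using assms by (intro divide_right_mono) auto
  finally show ?thesis
    using assms by (simp add: divide_right_mono field_simps)
qed

lemma pi_sq_div_36_le: "pi^2 / 36 \<le> (1/3 :: real)"
proof -
  have "pi \<le> 3.1415926535899"
    by (rule pi_approx(2))
  also have "(3.1415926535899::real) \<le> 16/5"
    by simp
  finally have "pi \<le> 16/5" .
  then have "pi^2 \<le> (16/5 :: real)^2"
    using pi_gt_zero by (intro power_mono) auto
  then show ?thesis by (simp add: power2_eq_square)
qed

lemma S2_signed_expansion:
  "(-1)^(t-1) * S2 t
     = (\<Sum>s<t. pochhammer (1/2) s / 2 * binom_m32 (t-1-s) * S2_inner (pi^2/36) s)"
proof -
  have "(-1)^(t-1) * (pochhammer (1/2 - real s) (s+1) * ((-3/2::real) gchoose (t-s-1))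
          * S2_inner (pi^2/36) s)
      = pochhammer (1/2) s / 2 * binom_m32 (t-1-s) * S2_inner (pi^2/36) s"
    if "s < t" for s
  proof -
    have signs: "(-1::real)^(t-1) * ((-1)^s * (-1)^(t-1-s)) = 1"
      using that by (simp flip: power_add)
    have "t - s - 1 = t - 1 - s" by simp
    then have "(-1)^(t-1) * (pochhammer (1/2 - real s) (s+1) * ((-3/2::real) gchoose (t-s-1))
          * S2_inner (pi^2/36) s)
        = ((-1)^(t-1) * ((-1)^s * (-1)^(t-1-s)))
          * (pochhammer (1/2) s / 2 * binom_m32 (t-1-s) * S2_inner (pi^2/36) s)"
      unfolding pochhammer_half_shift gchoose_neg_three_halves by (simp only: mult_ac)
    then show ?thesis unfolding signs by simp
  qed
  then show ?thesis
    unfolding S2_def sum_distrib_left S2_inner_def[symmetric] by (intro sum.cong) simp_all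
qed

lemma S2_signed_nonneg: "0 \<le> (-1)^(t-1) * S2 t"
  unfolding S2_signed_expansion
  by (intro sum_nonneg mult_nonneg_nonneg binom_m32_nonneg S2_inner_nonneg)
     (auto simp: pochhammer_nonneg)

lemma S2_signed_le: "(-1)^(t-1) * S2 t \<le> 3/2 * binom_m32 (t-1)"
proof -
  have inner_le: "S2_inner (pi^2/36) s \<le> 3/2 / fact (s+1)" for s
  proof -
    have "S2_inner (pi^2/36) s \<le> 1 / ((1 - pi^2/36) * fact (s+1))"
      using pi_sq_div_36_le by (intro S2_inner_le) auto
    also have "\<dots> \<le> 3/2 / fact (s+1)"
      using pi_sq_div_36_le by (simp add: divide_simps)
    finally show ?thesis .
  qed
  have "(-1)^(t-1) * S2 t
      \<le> (\<Sum>s<t. pochhammer (1/2) s / 2 * binom_m32 (t-1) * (3/2 / fact (s+1)))"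
    unfolding S2_signed_expansion
    by (intro sum_mono mult_mono binom_m32_mono inner_le)
       (auto simp: pochhammer_nonneg binom_m32_nonneg S2_inner_nonneg)
  also have "\<dots> = 3/4 * binom_m32 (t-1) * (\<Sum>s<t. pochhammer (1/2) s / fact (s+1))"
    unfolding sum_distrib_left by (intro sum.cong) auto
  also have "\<dots> \<le> 3/4 * binom_m32 (t-1) * 2"
    unfolding sum_pochhammer_half_over_fact
    by (intro mult_left_mono) (auto simp: pochhammer_nonneg binom_m32_nonneg)
  finally show ?thesis by simp
qed

lemma S2_signed_tail_le:
  "(-1)^(i+k-1) * S2 (i+k) \<le> 3/2 * sqrt (2 * (real k + 1)) * 2^i"
proof -
  have "binom_m32 (i+k-1) \<le> sqrt (2 * real (i+k-1) + 1)"
    using binom_m32_sq_le by (rule real_le_rsqrt)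
  also have "\<dots> \<le> sqrt (2 * (real k + 1) * (2^i)^2)"
  proof (rule real_sqrt_le_mono)
    have "real i + 1 \<le> 2^i"
      by (induction i) auto
    also have "(2::real)^i \<le> (2^i)^2"
      using one_le_power[of "2::real" i] by (simp add: power2_eq_square)
    finally have "real i + 1 \<le> (2^i)^2" .
    then have "(real k + 1) * (real i + 1) \<le> (real k + 1) * (2^i)^2"
      by (intro mult_left_mono) auto
    moreover have "2 * real (i+k-1) + 1 \<le> 2 * ((real k + 1) * (real i + 1))"
    proof -
      have "real (i+k-1) \<le> real i + real k"
        by (metis diff_le_self of_nat_add of_nat_mono)
      moreover have "2 * ((real k + 1) * (real i + 1)) = 2 * (real k * real i) + 2 * real i + 2 * real k + 2"
        by (simp add: algebra_simps)
      moreover have "0 \<le> real k * real i"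
        by simp
      ultimately show ?thesis
        by linarith
    qed
    ultimately have "2 * real (i+k-1) + 1 \<le> 2 * ((real k + 1) * (2^i)^2)"
      by linarith
    then show "2 * real (i+k-1) + 1 \<le> 2 * (real k + 1) * (2^i)^2"
      by (simp only: mult.assoc)
  qed
  also have "\<dots> = sqrt (2 * (real k + 1)) * 2^i"
    by (simp add: real_sqrt_mult)
  finally show ?thesis
    using S2_signed_le[of "i+k"] by simp
qed

lemma summable_tail_geometric_bound:
  fixes a :: "nat \<Rightarrow> real"
  assumes "0 \<le> r" "r < b" "b \<le> x"
    and a_nonneg: "\<And>i. 0 \<le> a (i+k)" and a_le: "\<And>i. a (i+k) \<le> C * r^i"
  shows "summable (\<lambda>i. a (i+k) / x^(i+k))"
    and "0 \<le> (\<Sum>i. a (i+k) / x^(i+k))"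
    and "(\<Sum>i. a (i+k) / x^(i+k)) \<le> C * b / (b - r) / x^k"
proof -
  have x_pos: "0 < x" using assms by linarith
  have C_nonneg: "0 \<le> C" using a_nonneg[of 0] a_le[of 0] by simp
  have term_le: "a (i+k) / x^(i+k) \<le> C / x^k * (r/b)^i" for i
  proof -
    have "a (i+k) / x^(i+k) \<le> C * r^i / x^(i+k)"
      using a_le x_pos by (intro divide_right_mono) auto
    also have "\<dots> = C / x^k * (r/x)^i"
      by (simp add: power_add power_divide)
    also have "\<dots> \<le> C / x^k * (r/b)^i"
      using assms x_pos C_nonneg by (intro mult_left_mono power_mono divide_left_mono) auto
    finally show ?thesis .
  qed
  have geom: "(\<lambda>i. C / x^k * (r/b)^i) sums (C / x^k * (1 / (1 - r/b)))"
    using assms by (intro sums_mult geometric_sums) auto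
  have term_nonneg: "0 \<le> a (i+k) / x^(i+k)" for i
    using a_nonneg x_pos by simp
  show summ: "summable (\<lambda>i. a (i+k) / x^(i+k))"
    by (rule summable_comparison_test'[OF sums_summable[OF geom], of 0])
       (metis abs_of_nonneg real_norm_def term_nonneg term_le)
  show "0 \<le> (\<Sum>i. a (i+k) / x^(i+k))"
    by (intro suminf_nonneg summ term_nonneg)
  have "(\<Sum>i. a (i+k) / x^(i+k)) \<le> (\<Sum>i. C / x^k * (r/b)^i)"
    by (intro suminf_le summ sums_summable[OF geom] term_le)
  also have "\<dots> = C / x^k * (1 / (1 - r/b))"
    by (rule sums_unique[OF geom, symmetric])
  also have "\<dots> = C * b / (b - r) / x^k"
    using assms by (simp add: field_simps)
  finally show "(\<Sum>i. a (i+k) / x^(i+k)) \<le> C * b / (b - r) / x^k" .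
qed

lemma alpha6_pos: "0 < alpha6"
  by (simp add: alpha6_def)

lemma alpha6_le_sinh: "alpha6 \<le> sinh alpha6"
  using real_le_x_sinh[of alpha6] alpha6_pos by (simp add: sinh_field_def exp_minus)

lemma cosh_alpha6_le: "cosh alpha6 \<le> 2"
proof -
  have "alpha6 \<le> 1"
    using pi_less_4 by (simp add: alpha6_def)
  then have "exp alpha6 \<le> 3"
    using exp_le by (meson exp_le_cancel_iff order.trans)
  moreover have "exp (- alpha6) \<le> 1"
    using alpha6_pos by simp
  ultimately have "exp alpha6 + exp (- alpha6) \<le> 4"
    by linarith
  then show ?thesis
    by (simp add: cosh_field_def)
qed

lemma L2_neg: "L2 k < 0"
proof -
  have "0 < 24 * cosh alpha6 / 23" "0 < 12 / (5 * sqrt (real k + 1))"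
    by simp_all
  then show ?thesis
    unfolding L2_def by (intro mult_neg_pos) (linarith, simp)
qed

lemma U2_scaled_gt: "18/11 * sqrt (2 * (real k + 1)) < U2 k * 24^k"
proof -
  have "U2 k * 24^k = - cosh alpha6 + 4 * (sinh alpha6 / alpha6) * (sqrt 2 * sqrt (real k + 1))
      + 66 / (25 * sqrt (real k + 1))"
    by (simp add: U2_def powr_minus powr_realpow field_simps)
  also have "sqrt 2 * sqrt (real k + 1) = sqrt (2 * (real k + 1))"
    by (rule real_sqrt_mult[symmetric])
  finally have U2_eq: "U2 k * 24^k = - cosh alpha6 + 4 * (sinh alpha6 / alpha6) * sqrt (2 * (real k + 1))
      + 66 / (25 * sqrt (real k + 1))" .
  have "4 * sqrt (2 * (real k + 1)) \<le> 4 * (sinh alpha6 / alpha6) * sqrt (2 * (real k + 1))"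
    using alpha6_le_sinh alpha6_pos by (intro mult_right_mono) (auto simp: field_simps)
  moreover have "1 \<le> sqrt (2 * (real k + 1))"
    by simp
  moreover have "0 < 66 / (25 * sqrt (real k + 1))"
    by simp
  ultimately show ?thesis
    unfolding U2_eq using cosh_alpha6_le by linarith
qed

theorem mainTheorem17:
  fixes n k :: nat
  assumes "n \<ge> 1" and "k \<ge> 1"
  shows "summable (\<lambda>i. g_e2 (i + k) / real n ^ (i + k))
       \<and> L2 k / real n ^ k < (\<Sum>i. g_e2 (i + k) / real n ^ (i + k))
       \<and> (\<Sum>i. g_e2 (i + k) / real n ^ (i + k)) < U2 k / real n ^ k"
proof -
  define a where "a t = (-1)^(t-1) * S2 t" for t
  define C where "C = 3/2 * sqrt (2 * (real k + 1))"
  have g_e2_eq: "g_e2 (i+k) / real n ^ (i+k) = a (i+k) / (24 * real n)^(i+k)" for i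
    by (simp add: g_e2_def a_def power_mult_distrib)
  have n_ge: "24 \<le> 24 * real n"
    using assms(1) by simp
  have a_nonneg: "0 \<le> a (i+k)" for i
    unfolding a_def by (rule S2_signed_nonneg)
  have a_le: "a (i+k) \<le> C * 2^i" for i
    unfolding a_def C_def by (rule S2_signed_tail_le)
  note tail = summable_tail_geometric_bound[of 2 24, OF _ _ n_ge a_nonneg a_le]
  have "L2 k / real n ^ k < 0"
    using L2_neg[of k] assms(1) by (simp add: divide_neg_pos)
  also have "0 \<le> (\<Sum>i. a (i+k) / (24 * real n)^(i+k))"
    using tail(2) by simp
  finally have lower: "L2 k / real n ^ k < (\<Sum>i. a (i+k) / (24 * real n)^(i+k))" .
  have "(\<Sum>i. a (i+k) / (24 * real n)^(i+k)) \<le> C * 24 / (24 - 2) / (24 * real n)^k"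
    using tail(3) by simp
  also have "\<dots> < U2 k * 24^k / (24 * real n)^k"
    using U2_scaled_gt[of k] assms(1) by (intro divide_strict_right_mono) (auto simp: C_def)
  also have "\<dots> = U2 k / real n ^ k"
    by (simp add: power_mult_distrib)
  finally have upper: "(\<Sum>i. a (i+k) / (24 * real n)^(i+k)) < U2 k / real n ^ k" .
  show ?thesis
    unfolding g_e2_eq using tail(1) lower upper by simp
qed

end
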